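(* Let $H=(Q,\pi,f_0,f_1)$ satisfy Assumptions A1 and A2 (see context). Then for each $\lambda\in(0,1)$, $$\mathrm{mTDR}_H(\varphi_{\lambda,H})=\sup\{\mathrm{mTDR}_H(\psi):\mathrm{mFDR}_H(\psi)\le\mathrm{mFDR}_H(\varphi_{\lambda,H})\},$$ the supremum being over all multiple testing procedures $\psi$ (measurable maps $X\mapsto\psi(X)\in\{0,1\}^N$).
   Context: Two-state HMM: $\mu$ Lebesgue on $\mathbb R$ or counting on $\mathbb Z$; under $\Pi_H$, $\theta=(\theta_n)_{n\le N}$ is a Markov chain on $\{0,1\}$ (initial law $\pi$, transition $Q$) and given $\theta$ the $X_n$ are independent with $\mu$-densities $f_{\theta_n}$; $E_H$ denotes expectation. Assumption A1: (i) some $\nu>0$ has $\max_jE_{X\sim f_j}|X|^\nu<\infty$; (ii) some $x^*\in\mathbb R\cup\{\pm\infty\}$ has $f_1/f_0\to\infty$ as $x\uparrow x^*$ or as $x\downarrow x^*$ (conventions $1/0=\infty,0/0=0$). Assumption A2: $Q$ has distinct rows, $\min_{ij}Q_{ij}>0$, $\pi$ invariant for $Q$. $\ell_i=\Pi_H(\theta_i=0\mid X)$, $\varphi_{\lambda,H}=(\mathbb 1\{\ell_i<\lambda\})_{i\le N}$. $\mathrm{mTDR}_H(\varphi)=\frac{E_H\#\{i:\theta_i=1,\varphi_i=1\}}{E_H\#\{i:\theta_i=1\}}$, $\mathrm{mFDR}_H(\varphi)=\frac{E_H\#\{i:\theta_i=0,\varphi_i=1\}}{E_H\#\{i:\varphi_i=1\}}$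 with the convention $0/0=0$. *)

theory Defs
  imports "HOL-Analysis.Analysis"
begin

definition ZZ_count :: "real measure" where
  "ZZ_count = distr (count_space (UNIV::int set)) borel real_of_int"

definition base_measure :: "bool \<Rightarrow> real measure" where
  "base_measure disc = (if disc then ZZ_count else lborel)"

definition base_support :: "bool \<Rightarrow> real set" where
  "base_support disc = (if disc then \<int> else UNIV)"

definition obs_space :: "bool \<Rightarrow> nat \<Rightarrow> (nat \<Rightarrow> real) measure" where
  "obs_space disc N = PiM {..<N} (\<lambda>_. base_measure disc)"

definition states :: "nat \<Rightarrow> (nat \<Rightarrow> nat) set" where
  "states N = PiE {..<N} (\<lambda>_. {0,1})"

definition prior_w :: "(nat \<Rightarrow> real) \<Rightarrow> (nat \<Rightarrow> nat \<Rightarrow> real) \<Rightarrow> nat \<Rightarrow> (nat \<Rightarrow> nat) \<Rightarrow> real" where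
  "prior_w p Q N t = (if N = 0 then 1 else p (t 0) * (\<Prod>n\<in>{1..<N}. Q (t (n - 1)) (t n)))"

text \<open>Joint density of (theta, X) w.r.t. (counting on {0,1}^N) x mu^N.\<close>
definition joint_dens :: "(nat \<Rightarrow> real) \<Rightarrow> (nat \<Rightarrow> nat \<Rightarrow> real) \<Rightarrow> (nat \<Rightarrow> real \<Rightarrow> real)
    \<Rightarrow> nat \<Rightarrow> (nat \<Rightarrow> nat) \<Rightarrow> (nat \<Rightarrow> real) \<Rightarrow> real" where
  "joint_dens p Q f N t x = prior_w p Q N t * (\<Prod>n<N. f (t n) (x n))"

definition EH :: "bool \<Rightarrow> (nat \<Rightarrow> real) \<Rightarrow> (nat \<Rightarrow> nat \<Rightarrow> real) \<Rightarrow> (nat \<Rightarrow> real \<Rightarrow> real)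
    \<Rightarrow> nat \<Rightarrow> ((nat \<Rightarrow> nat) \<Rightarrow> (nat \<Rightarrow> real) \<Rightarrow> real) \<Rightarrow> real" where
  "EH disc p Q f N g =
     (\<Sum>t\<in>states N. LINT x|obs_space disc N. g t x * joint_dens p Q f N t x)"

definition post0 :: "(nat \<Rightarrow> real) \<Rightarrow> (nat \<Rightarrow> nat \<Rightarrow> real) \<Rightarrow> (nat \<Rightarrow> real \<Rightarrow> real)
    \<Rightarrow> nat \<Rightarrow> nat \<Rightarrow> (nat \<Rightarrow> real) \<Rightarrow> real" where
  "post0 p Q f N i x =
     (\<Sum>t\<in>{t\<in>states N. t i = 0}. joint_dens p Q f N t x) / (\<Sum>t\<in>states N. joint_dens p Q f N t x)"

definition phi_proc :: "(nat \<Rightarrow> real) \<Rightarrow> (nat \<Rightarrow> nat \<Rightarrow> real) \<Rightarrow> (nat \<Rightarrow> real \<Rightarrow> real)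
    \<Rightarrow> nat \<Rightarrow> real \<Rightarrow> (nat \<Rightarrow> real) \<Rightarrow> nat \<Rightarrow> bool" where
  "phi_proc p Q f N lam x i = (post0 p Q f N i x < lam)"

text \<open>Multiple testing procedure: measurable map x |-> psi(x) in {0,1}^N
  (psi x i = True means psi_i(x) = 1).\<close>
definition is_MTP :: "bool \<Rightarrow> nat \<Rightarrow> ((nat \<Rightarrow> real) \<Rightarrow> nat \<Rightarrow> bool) \<Rightarrow> bool" where
  "is_MTP disc N psi \<longleftrightarrow>
     (\<forall>i<N. (\<lambda>x. psi x i) \<in> obs_space disc N \<rightarrow>\<^sub>M count_space UNIV)"

text \<open>Marginal true discovery rate and marginal false discovery rate (x/0 = 0 in Isabelle).\<close>
definition mTDR :: "bool \<Rightarrow> (nat \<Rightarrow> real) \<Rightarrow> (nat \<Rightarrow> nat \<Rightarrow> real) \<Rightarrow> (nat \<Rightarrow> real \<Rightarrow> real)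
    \<Rightarrow> nat \<Rightarrow> ((nat \<Rightarrow> real) \<Rightarrow> nat \<Rightarrow> bool) \<Rightarrow> real" where
  "mTDR disc p Q f N psi =
     EH disc p Q f N (\<lambda>t x. real (card {i\<in>{..<N}. t i = 1 \<and> psi x i}))
     / EH disc p Q f N (\<lambda>t x. real (card {i\<in>{..<N}. t i = 1}))"

definition mFDR :: "bool \<Rightarrow> (nat \<Rightarrow> real) \<Rightarrow> (nat \<Rightarrow> nat \<Rightarrow> real) \<Rightarrow> (nat \<Rightarrow> real \<Rightarrow> real)
    \<Rightarrow> nat \<Rightarrow> ((nat \<Rightarrow> real) \<Rightarrow> nat \<Rightarrow> bool) \<Rightarrow> real" where
  "mFDR disc p Q f N psi =
     EH disc p Q f N (\<lambda>t x. real (card {i\<in>{..<N}. t i = 0 \<and> psi x i}))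
     / EH disc p Q f N (\<lambda>t x. real (card {i\<in>{..<N}. psi x i}))"

definition densities :: "bool \<Rightarrow> (nat \<Rightarrow> real \<Rightarrow> real) \<Rightarrow> bool" where
  "densities disc f \<longleftrightarrow>
     (\<forall>j\<in>{0,1}. f j \<in> borel_measurable borel \<and> (\<forall>x. 0 \<le> f j x)
        \<and> (\<integral>\<^sup>+x. ennreal (f j x) \<partial>base_measure disc) = 1)"

definition lr :: "(nat \<Rightarrow> real \<Rightarrow> real) \<Rightarrow> real \<Rightarrow> ereal" where
  "lr f x = (if f 0 x = 0 then (if f 1 x = 0 then 0 else \<infinity>) else ereal (f 1 x / f 0 x))"

text \<open>A1 (ii): f_1/f_0 tends to infinity as x increases to or decreases to some
  x* in R or {+-infinity}, x ranging over the support of mu (R or Z);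
  the filter is required to be proper so the limit is meaningful.\<close>
definition assm_A1 :: "bool \<Rightarrow> (nat \<Rightarrow> real \<Rightarrow> real) \<Rightarrow> bool" where
  "assm_A1 disc f \<longleftrightarrow>
     (\<exists>\<nu>>0. \<forall>j\<in>{0,1}. (\<integral>\<^sup>+x. ennreal (\<bar>x\<bar> powr \<nu> * f j x) \<partial>base_measure disc) < \<infinity>)
   \<and> (\<exists>F\<in>{at_top, at_bot} \<union> {at_left c | c. True} \<union> {at_right c | c. True}.
        inf F (principal (base_support disc)) \<noteq> bot
        \<and> (lr f \<longlongrightarrow> \<infinity>) (inf F (principal (base_support disc))))"

definition assm_A2 :: "(nat \<Rightarrow> real) \<Rightarrow> (nat \<Rightarrow> nat \<Rightarrow> real) \<Rightarrow> bool" where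
  "assm_A2 p Q \<longleftrightarrow>
     (\<forall>i\<in>{0,1}. \<forall>j\<in>{0,1}. 0 < Q i j)
   \<and> (\<forall>i\<in>{0,1}. Q i 0 + Q i 1 = 1)
   \<and> (\<exists>j\<in>{0,1}. Q 0 j \<noteq> Q 1 j)
   \<and> (\<forall>i\<in>{0,1}. 0 \<le> p i) \<and> p 0 + p 1 = 1
   \<and> (\<forall>j\<in>{0,1}. p j = p 0 * Q 0 j + p 1 * Q 1 j)"

end

theory Submission
  imports Defs
begin

(* A Neyman-Pearson argument. Let w_j(i, x) be the joint density of theta_i = j and X = x.
   For a procedure psi the expected numbers of false and true discoveries are
   a = sum_i int psi_i w_0(i, .) and b = sum_i int psi_i w_1(i, .). Since
   ell_i = w_0 / (w_0 + w_1), the rule phi_lambda rejects exactly where the Lagrangian weight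
   lambda w_1 - (1 - lambda) w_0 is positive, so it maximises lambda b - (1 - lambda) a over all
   procedures, and this maximum is strictly positive unless phi_lambda makes no discoveries.
   Together with the mFDR constraint a'/(a' + b') <= a/(a + b) this forces b' <= b. *)

lemma integrable_if_pred:
  fixes g :: "'a \<Rightarrow> real"
  assumes "integrable M g" "Measurable.pred M R"
  shows "integrable M (\<lambda>x. if R x then g x else 0)"
  using assms by (intro Bochner_Integration.integrable_bound[OF assms(1)]) auto

lemma ratio_less_iff_lagrangian_pos:
  fixes w0 w1 l :: real
  assumes "0 < w0 + w1"
  shows "w0 / (w0 + w1) < l \<longleftrightarrow> 0 < l * w1 + (l - 1) * w0"
  using assms by (simp add: divide_less_eq algebra_simps)

lemma threshold_selects_positive_part:
  fixes w0 w1 l :: real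
  assumes "0 \<le> w0" "0 \<le> w1"
  shows "(if w0 / (w0 + w1) < l then l * w1 + (l - 1) * w0 else 0) = max 0 (l * w1 + (l - 1) * w0)"
proof (cases "w0 + w1 = 0")
  case True
  with assms have "w0 = 0" "w1 = 0" by auto
  then show ?thesis by simp
next
  case False
  with assms have "0 < w0 + w1" by simp
  then show ?thesis by (simp add: ratio_less_iff_lagrangian_pos)
qed

lemma integral_pos_if_support_covered:
  fixes g h :: "'a \<Rightarrow> real"
  assumes g: "integrable M g" "\<And>x. 0 \<le> g x"
    and h: "\<And>x. 0 \<le> h x" "\<And>x. 0 < h x \<Longrightarrow> 0 < g x"
    and pos: "0 < integral\<^sup>L M h"
  shows "0 < integral\<^sup>L M g"
proof (rule ccontr)
  assume "\<not> 0 < integral\<^sup>L M g"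
  moreover have "0 \<le> integral\<^sup>L M g"
    using g by (intro integral_nonneg_AE) auto
  ultimately have "integral\<^sup>L M g = 0"
    by simp
  with g have "AE x in M. g x = 0"
    by (simp add: integral_nonneg_eq_0_iff_AE)
  moreover have "h x = 0" if "g x = 0" for x
    using h[of x] that by force
  ultimately have "AE x in M. h x = 0"
    by (auto elim: eventually_mono)
  then have "integral\<^sup>L M h = 0"
    by (rule integral_eq_zero_AE)
  with pos show False by simp
qed

lemma ratio_constrained_le_by_lagrangian:
  fixes a b a' b' l :: real
  assumes "0 \<le> a" "0 \<le> b" "0 \<le> a'" "0 \<le> b'" "0 < l" "l \<le> 1"
    and lagrangian: "l * b' + (l - 1) * a' \<le> l * b + (l - 1) * a"
    and strict: "0 < a + b \<Longrightarrow> 0 < l * b + (l - 1) * a"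
    and ratio: "a' / (a' + b') \<le> a / (a + b)"
  shows "b' \<le> b"
proof (cases "a' + b' = 0")
  case True
  then show ?thesis using assms by auto
next
  case False
  then have pos': "0 < a' + b'" using assms by auto
  show ?thesis
  proof (cases "a + b = 0")
    case True
    then have "a = 0" "b = 0" using assms by auto
    with ratio pos' \<open>0 \<le> a'\<close> have "a' = 0" by (simp add: divide_le_0_iff)
    with lagrangian \<open>a = 0\<close> \<open>b = 0\<close> \<open>0 < l\<close> show ?thesis by (simp add: mult_le_0_iff)
  next
    case False
    then have pos: "0 < a + b" using assms by auto
    \<comment> \<open>cross-multiplying the ratio constraint gives a' b \<le> a b'; adding b times the
      Lagrangian inequality leaves b' L \<le> b L with L > 0\<close>
    have "a' * b \<le> a * b'"
      using ratio pos pos' by (simp add: divide_simps algebra_simps)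
    then have "(1 - l) * (a' * b) \<le> (1 - l) * (a * b')"
      using \<open>l \<le> 1\<close> by (intro mult_left_mono) auto
    moreover have "b * (l * b' + (l - 1) * a') \<le> b * (l * b + (l - 1) * a)"
      using lagrangian \<open>0 \<le> b\<close> by (rule mult_left_mono)
    ultimately have "b' * (l * b + (l - 1) * a) \<le> b * (l * b + (l - 1) * a)"
      by (simp add: algebra_simps)
    with strict pos show ?thesis by simp
  qed
qed

lemma sets_base_measure [simp, measurable_cong]: "sets (base_measure disc) = sets borel"
  by (simp add: base_measure_def ZZ_count_def)

lemma space_base_measure [simp]: "space (base_measure disc) = UNIV"
  by (simp add: base_measure_def ZZ_count_def)

lemma sigma_finite_ZZ_count: "sigma_finite_measure ZZ_count"
proof
  let ?A = "range (\<lambda>n::nat. {- real n..real n})"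
  have "emeasure ZZ_count {- real n..real n} = card {- int n..int n}" for n
  proof -
    have "real_of_int -` {- real n..real n} = {- int n..int n}"
      by auto
    then show ?thesis
      by (simp add: ZZ_count_def emeasure_distr)
  qed
  moreover have "\<Union> ?A = UNIV"
  proof -
    have "\<exists>n::nat. x \<in> {- real n..real n}" for x :: real
      using real_arch_simple[of "\<bar>x\<bar>"] by (force simp: abs_le_iff)
    then show ?thesis by blast
  qed
  ultimately show "\<exists>A. countable A \<and> A \<subseteq> sets ZZ_count \<and> \<Union> A = space ZZ_count
      \<and> (\<forall>a\<in>A. emeasure ZZ_count a \<noteq> \<infinity>)"
    by (intro exI[of _ ?A]) (auto simp: ZZ_count_def)
qed

lemma sigma_finite_base_measure: "sigma_finite_measure (base_measure disc)"
  by (simp add: base_measure_def sigma_finite_ZZ_count lborel.sigma_finite_measure_axioms)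

lemma integrable_density:
  assumes "densities disc f" "j \<in> {0, 1}"
  shows "integrable (base_measure disc) (f j)"
proof (rule integrableI_nonneg)
  show "f j \<in> borel_measurable (base_measure disc)" "AE x in base_measure disc. 0 \<le> f j x"
    using assms unfolding densities_def by auto
  show "(\<integral>\<^sup>+x. ennreal (f j x) \<partial>base_measure disc) < \<infinity>"
    using assms unfolding densities_def by auto
qed

lemma states_range: "t \<in> states N \<Longrightarrow> n < N \<Longrightarrow> t n \<in> {0, 1}"
  unfolding states_def by auto

lemma finite_states [simp]: "finite (states N)"
  unfolding states_def by (intro finite_PiE) auto

lemma prior_w_nonneg:
  assumes "assm_A2 p Q" "t \<in> states N"
  shows "0 \<le> prior_w p Q N t"
proof -
  have "0 \<le> p i" "0 \<le> Q i j" if "i \<in> {0, 1}" "j \<in> {0, 1}" for i j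
    using assms(1) that unfolding assm_A2_def by (auto simp: less_imp_le)
  with states_range[OF assms(2)] show ?thesis
    unfolding prior_w_def by (auto intro!: mult_nonneg_nonneg prod_nonneg)
qed

lemma is_MTP_pred: "is_MTP disc N psi \<Longrightarrow> i < N \<Longrightarrow> Measurable.pred (obs_space disc N) (\<lambda>x. psi x i)"
  unfolding is_MTP_def by blast

(* The joint density of S(theta_i) and X = x; w_j(i, x) above is the case S = (=) j. *)
definition post_weight :: "(nat \<Rightarrow> real) \<Rightarrow> (nat \<Rightarrow> nat \<Rightarrow> real) \<Rightarrow> (nat \<Rightarrow> real \<Rightarrow> real)
    \<Rightarrow> nat \<Rightarrow> (nat \<Rightarrow> bool) \<Rightarrow> nat \<Rightarrow> (nat \<Rightarrow> real) \<Rightarrow> real" where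
  "post_weight p Q f N S i x = (\<Sum>t\<in>{t\<in>states N. S (t i)}. joint_dens p Q f N t x)"

definition discovery_integral :: "bool \<Rightarrow> nat \<Rightarrow> ((nat \<Rightarrow> real) \<Rightarrow> nat \<Rightarrow> bool)
    \<Rightarrow> (nat \<Rightarrow> (nat \<Rightarrow> real) \<Rightarrow> real) \<Rightarrow> real" where
  "discovery_integral disc N psi w = (\<Sum>i<N. \<integral>x. (if psi x i then w i x else 0) \<partial>obs_space disc N)"

lemma discovery_integral_cong:
  "(\<And>i x. i < N \<Longrightarrow> v i x = w i x) \<Longrightarrow> discovery_integral disc N psi v = discovery_integral disc N psi w"
  unfolding discovery_integral_def by (intro sum.cong refl Bochner_Integration.integral_cong) auto

lemma post0_eq_post_weight:
  "post0 p Q f N i x = post_weight p Q f N (\<lambda>s. s = 0) i x / post_weight p Q f N (\<lambda>_. True) i x"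
  unfolding post0_def post_weight_def by simp

lemma post_weight_True:
  assumes "i < N"
  shows "post_weight p Q f N (\<lambda>_. True) i x
    = post_weight p Q f N (\<lambda>s. s = 0) i x + post_weight p Q f N (\<lambda>s. s = 1) i x"
proof -
  have "{t\<in>states N. True} = {t\<in>states N. t i = 0} \<union> {t\<in>states N. t i = 1}"
    using states_range[OF _ assms] by auto
  then show ?thesis
    unfolding post_weight_def by (simp only:) (rule sum.union_disjoint; auto)
qed

lemma discovery_integral_lincomb:
  assumes "is_MTP disc N psi"
    and "\<And>i. i < N \<Longrightarrow> integrable (obs_space disc N) (v i)"
    and "\<And>i. i < N \<Longrightarrow> integrable (obs_space disc N) (w i)"
  shows "discovery_integral disc N psi (\<lambda>i x. a * v i x + b * w i x)
    = a * discovery_integral disc N psi v + b * discovery_integral disc N psi w"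
proof -
  have "(\<integral>x. (if psi x i then a * v i x + b * w i x else 0) \<partial>obs_space disc N)
      = a * (\<integral>x. (if psi x i then v i x else 0) \<partial>obs_space disc N)
        + b * (\<integral>x. (if psi x i then w i x else 0) \<partial>obs_space disc N)" if "i < N" for i
  proof -
    have "(\<lambda>x. if psi x i then a * v i x + b * w i x else 0)
        = (\<lambda>x. a * (if psi x i then v i x else 0) + b * (if psi x i then w i x else 0))"
      by auto
    then show ?thesis
      using that assms
      by (simp add: integrable_if_pred is_MTP_pred)
  qed
  then show ?thesis
    unfolding discovery_integral_def by (simp add: sum.distrib sum_distrib_left)
qed

lemma discovery_integral_mono:
  assumes "is_MTP disc N psi" "is_MTP disc N phi"
    and "\<And>i. i < N \<Longrightarrow> integrable (obs_space disc N) (w i)"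
    and "\<And>i x. i < N \<Longrightarrow> (if psi x i then w i x else 0) \<le> (if phi x i then w i x else 0)"
  shows "discovery_integral disc N psi w \<le> discovery_integral disc N phi w"
  unfolding discovery_integral_def
  using assms by (intro sum_mono integral_mono) (auto simp: integrable_if_pred is_MTP_pred)

locale hmm_threshold =
  fixes disc :: bool and p :: "nat \<Rightarrow> real" and Q :: "nat \<Rightarrow> nat \<Rightarrow> real"
    and f :: "nat \<Rightarrow> real \<Rightarrow> real" and N :: nat and lam :: real
  assumes dens: "densities disc f" and A2: "assm_A2 p Q"
begin

lemma joint_dens_nonneg:
  assumes "t \<in> states N"
  shows "0 \<le> joint_dens p Q f N t x"
proof -
  have "0 \<le> f j y" if "j \<in> {0, 1}" for j y
    using dens that unfolding densities_def by blast
  with states_range[OF assms] show ?thesis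
    unfolding joint_dens_def by (auto intro!: mult_nonneg_nonneg prior_w_nonneg[OF A2 assms] prod_nonneg)
qed

lemma integrable_joint_dens:
  assumes "t \<in> states N"
  shows "integrable (obs_space disc N) (joint_dens p Q f N t)"
proof -
  interpret product_sigma_finite "\<lambda>_::nat. base_measure disc"
    by (simp add: product_sigma_finite_def sigma_finite_base_measure)
  have "integrable (obs_space disc N) (\<lambda>x. \<Prod>n\<in>{..<N}. f (t n) (x n))"
    unfolding obs_space_def
    by (intro product_integrable_prod) (auto intro!: integrable_density[OF dens] states_range[OF assms])
  then show ?thesis
    unfolding joint_dens_def by simp
qed

lemma post_weight_nonneg: "0 \<le> post_weight p Q f N S i x"
  unfolding post_weight_def by (intro sum_nonneg joint_dens_nonneg) auto

lemma integrable_post_weight: "integrable (obs_space disc N) (post_weight p Q f N S i)"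
  unfolding post_weight_def by (intro Bochner_Integration.integrable_sum integrable_joint_dens) auto

lemma discovery_integral_post_weight_nonneg: "0 \<le> discovery_integral disc N psi (post_weight p Q f N S)"
  unfolding discovery_integral_def by (intro sum_nonneg integral_nonneg_AE AE_I2) (simp add: post_weight_nonneg)

lemma EH_card_discoveries:
  assumes psi: "is_MTP disc N psi"
  shows "EH disc p Q f N (\<lambda>t x. real (card {i\<in>{..<N}. S (t i) \<and> psi x i}))
    = discovery_integral disc N psi (post_weight p Q f N S)"
proof -
  let ?M = "obs_space disc N"
  let ?h = "\<lambda>t i x. if S (t i) \<and> psi x i then joint_dens p Q f N t x else 0"
  have integrable_h: "integrable ?M (?h t i)" if "t \<in> states N" "i < N" for t i
    using that
    by (intro integrable_if_pred integrable_joint_dens pred_intros_logic is_MTP_pred[OF psi]) auto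
  have "EH disc p Q f N (\<lambda>t x. real (card {i\<in>{..<N}. S (t i) \<and> psi x i}))
      = (\<Sum>t\<in>states N. \<integral>x. (\<Sum>i<N. ?h t i x) \<partial>?M)"
    unfolding EH_def
    by (intro sum.cong refl Bochner_Integration.integral_cong)
       (simp add: sum.inter_filter[symmetric])
  also have "\<dots> = (\<Sum>t\<in>states N. \<Sum>i<N. \<integral>x. ?h t i x \<partial>?M)"
    using integrable_h by (intro sum.cong refl Bochner_Integration.integral_sum) auto
  also have "\<dots> = (\<Sum>i<N. \<Sum>t\<in>states N. \<integral>x. ?h t i x \<partial>?M)"
    by (rule sum.swap)
  also have "\<dots> = (\<Sum>i<N. \<integral>x. (\<Sum>t\<in>states N. ?h t i x) \<partial>?M)"
    using integrable_h by (intro sum.cong refl Bochner_Integration.integral_sum[symmetric]) auto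
  also have "\<dots> = discovery_integral disc N psi (post_weight p Q f N S)"
    unfolding discovery_integral_def post_weight_def
    by (intro sum.cong refl Bochner_Integration.integral_cong) (auto simp: sum.inter_filter[symmetric])
  finally show ?thesis .
qed

abbreviation "w0 \<equiv> post_weight p Q f N (\<lambda>s. s = 0)"
abbreviation "w1 \<equiv> post_weight p Q f N (\<lambda>s. s = 1)"
abbreviation "lagrangian \<equiv> \<lambda>i x. lam * w1 i x + (lam - 1) * w0 i x"
abbreviation "phi \<equiv> phi_proc p Q f N lam"
abbreviation "false_discoveries psi \<equiv> discovery_integral disc N psi w0"
abbreviation "true_discoveries psi \<equiv> discovery_integral disc N psi w1"

lemma discovery_integral_post_weight_True:
  assumes "is_MTP disc N psi"
  shows "discovery_integral disc N psi (post_weight p Q f N (\<lambda>_. True))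
    = false_discoveries psi + true_discoveries psi"
proof -
  have "discovery_integral disc N psi (post_weight p Q f N (\<lambda>_. True))
      = discovery_integral disc N psi (\<lambda>i x. 1 * w0 i x + 1 * w1 i x)"
    by (rule discovery_integral_cong) (simp add: post_weight_True)
  then show ?thesis
    using discovery_integral_lincomb[OF assms, where v = w0 and w = w1 and a = 1 and b = 1]
    by (simp add: integrable_post_weight)
qed

lemma discovery_integral_lagrangian:
  "is_MTP disc N psi \<Longrightarrow> discovery_integral disc N psi lagrangian
    = lam * true_discoveries psi + (lam - 1) * false_discoveries psi"
  by (rule discovery_integral_lincomb[where v = w1 and w = w0]) (simp_all add: integrable_post_weight)

lemma mFDR_eq_discovery_integrals:
  assumes "is_MTP disc N psi"
  shows "mFDR disc p Q f N psi = false_discoveries psi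
    / (false_discoveries psi + true_discoveries psi)"
  using EH_card_discoveries[OF assms, of "\<lambda>s. s = 0"]
    EH_card_discoveries[OF assms, of "\<lambda>_. True"]
  unfolding mFDR_def discovery_integral_post_weight_True[OF assms, symmetric] by simp

lemma mTDR_eq_discovery_integrals:
  assumes "is_MTP disc N psi"
  shows "mTDR disc p Q f N psi = true_discoveries psi / discovery_integral disc N (\<lambda>_ _. True) w1"
proof -
  have "is_MTP disc N (\<lambda>_ _. True)"
    by (simp add: is_MTP_def)
  then show ?thesis
    using EH_card_discoveries[OF assms, of "\<lambda>s. s = 1"]
      EH_card_discoveries[where psi = "\<lambda>_ _. True" and S = "\<lambda>s. s = 1"]
    unfolding mTDR_def by simp
qed

lemma phi_proc_iff_ratio: "i < N \<Longrightarrow> phi x i \<longleftrightarrow> w0 i x / (w0 i x + w1 i x) < lam"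
  unfolding phi_proc_def post0_eq_post_weight by (simp add: post_weight_True)

lemma is_MTP_phi_proc: "is_MTP disc N phi"
  unfolding is_MTP_def
proof safe
  fix i assume "i < N"
  have [measurable]: "w0 i \<in> borel_measurable (obs_space disc N)" "w1 i \<in> borel_measurable (obs_space disc N)"
    by (intro borel_measurable_integrable integrable_post_weight)+
  show "Measurable.pred (obs_space disc N) (\<lambda>x. phi x i)"
    unfolding phi_proc_iff_ratio[OF \<open>i < N\<close>] by measurable
qed

lemma phi_proc_selects_positive_lagrangian:
  "i < N \<Longrightarrow> (if phi x i then lagrangian i x else 0) = max 0 (lagrangian i x)"
  unfolding phi_proc_iff_ratio
  by (intro threshold_selects_positive_part post_weight_nonneg)

lemma lagrangian_le_phi_proc:
  assumes "is_MTP disc N psi"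
  shows "lam * true_discoveries psi + (lam - 1) * false_discoveries psi
    \<le> lam * true_discoveries phi + (lam - 1) * false_discoveries phi"
  unfolding discovery_integral_lagrangian[OF assms, symmetric]
    discovery_integral_lagrangian[OF is_MTP_phi_proc, symmetric]
proof (rule discovery_integral_mono[OF assms is_MTP_phi_proc])
  show "integrable (obs_space disc N) (lagrangian i)" for i
    using integrable_post_weight by simp
  show "(if psi x i then lagrangian i x else 0) \<le> (if phi x i then lagrangian i x else 0)"
    if "i < N" for i x
    unfolding phi_proc_selects_positive_lagrangian[OF that] by simp
qed

lemma lagrangian_phi_proc_pos:
  assumes "0 < false_discoveries phi + true_discoveries phi"
  shows "0 < lam * true_discoveries phi + (lam - 1) * false_discoveries phi"
proof -
  let ?M = "obs_space disc N"
  let ?g = "\<lambda>i x. if phi x i then lagrangian i x else 0"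
  let ?h = "\<lambda>i x. if phi x i then post_weight p Q f N (\<lambda>_. True) i x else 0"
  have g_nonneg: "0 \<le> ?g i x" if "i < N" for i x
    using that by (simp add: phi_proc_selects_positive_lagrangian)
  have total_pos: "0 < discovery_integral disc N phi (post_weight p Q f N (\<lambda>_. True))"
    using assms discovery_integral_post_weight_True[OF is_MTP_phi_proc] by simp
  obtain i where "i < N" and h_pos: "0 < integral\<^sup>L ?M (?h i)"
  proof -
    have "\<not> (\<Sum>i<N. integral\<^sup>L ?M (?h i)) \<le> 0"
      using total_pos unfolding discovery_integral_def by simp
    then show ?thesis
      using that sum_nonpos[of "{..<N}" "\<lambda>i. integral\<^sup>L ?M (?h i)"] by (meson lessThan_iff not_less)
  qed
  have "0 < integral\<^sup>L ?M (?g i)"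
  proof (rule integral_pos_if_support_covered[OF _ _ _ _ h_pos])
    show "integrable ?M (?g i)"
      using integrable_post_weight is_MTP_pred[OF is_MTP_phi_proc \<open>i < N\<close>]
      by (intro integrable_if_pred) auto
    show "0 < ?g i x" if "0 < ?h i x" for x
    proof -
      from that have "phi x i" "0 < w0 i x + w1 i x"
        using post_weight_True[OF \<open>i < N\<close>] by (auto split: if_splits)
      then show ?thesis
        using ratio_less_iff_lagrangian_pos phi_proc_iff_ratio[OF \<open>i < N\<close>] by simp
    qed
  qed (use g_nonneg \<open>i < N\<close> post_weight_nonneg in auto)
  then have "0 < discovery_integral disc N phi lagrangian"
    unfolding discovery_integral_def
    using \<open>i < N\<close> g_nonneg by (intro sum_pos2[of _ i]) (auto intro: integral_nonneg_AE)
  then show ?thesis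
    unfolding discovery_integral_lagrangian[OF is_MTP_phi_proc] .
qed

lemma mTDR_le_phi_proc:
  assumes "0 < lam" "lam \<le> 1" and psi: "is_MTP disc N psi"
    and "mFDR disc p Q f N psi \<le> mFDR disc p Q f N phi"
  shows "mTDR disc p Q f N psi \<le> mTDR disc p Q f N phi"
proof -
  have "true_discoveries psi \<le> true_discoveries phi"
  proof (rule ratio_constrained_le_by_lagrangian[OF _ _ _ _ assms(1,2)])
    show "false_discoveries psi / (false_discoveries psi + true_discoveries psi)
        \<le> false_discoveries phi / (false_discoveries phi + true_discoveries phi)"
      using assms(4) unfolding mFDR_eq_discovery_integrals[OF psi] mFDR_eq_discovery_integrals[OF is_MTP_phi_proc] .
  qed (use lagrangian_le_phi_proc[OF psi] lagrangian_phi_proc_pos discovery_integral_post_weight_nonneg in auto)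
  then show ?thesis
    unfolding mTDR_eq_discovery_integrals[OF psi] mTDR_eq_discovery_integrals[OF is_MTP_phi_proc]
    by (intro divide_right_mono discovery_integral_post_weight_nonneg)
qed

end

theorem lemma21:
  fixes disc :: bool and N :: nat and p :: "nat \<Rightarrow> real" and Q :: "nat \<Rightarrow> nat \<Rightarrow> real"
    and f :: "nat \<Rightarrow> real \<Rightarrow> real" and lam :: real
  assumes "densities disc f"
    and "assm_A1 disc f"
    and "assm_A2 p Q"
    and "0 < lam" and "lam < 1"
  shows "mTDR disc p Q f N (phi_proc p Q f N lam) =
         Sup {mTDR disc p Q f N psi | psi. is_MTP disc N psi \<and>
                mFDR disc p Q f N psi \<le> mFDR disc p Q f N (phi_proc p Q f N lam)}"
proof -
  interpret hmm_threshold disc p Q f N lam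
    using assms(1,3) by unfold_locales
  show ?thesis
  proof (rule cSup_eq_maximum[symmetric])
    show "mTDR disc p Q f N phi \<in> {mTDR disc p Q f N psi | psi. is_MTP disc N psi \<and>
        mFDR disc p Q f N psi \<le> mFDR disc p Q f N phi}"
      using is_MTP_phi_proc by blast
  next
    fix y assume "y \<in> {mTDR disc p Q f N psi | psi. is_MTP disc N psi \<and>
        mFDR disc p Q f N psi \<le> mFDR disc p Q f N phi}"
    then show "y \<le> mTDR disc p Q f N phi"
      using mTDR_le_phi_proc assms(4,5) by fastforce
  qed
qed

end
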